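(* Let $\alpha(s)$ be an arc-length parametrized curve in $\mathbb{R}^3$ whose curvature $\kappa(s)$ is nonconstant (and nonvanishing) and satisfies $$5(\kappa')^2=c_2-\frac{2c_1}{\kappa}+\kappa^4$$ for some real constants $c_1,c_2$, and whose torsion $\tau(s)$ is nonconstant and satisfies $$\kappa^{(4)}-15\kappa(\kappa')^2-10\kappa^2\kappa''+\kappa^5-\tau^2\left(\kappa''-2\kappa^3\right)=0.$$ Let $N(s)$ be the principal unit normal of $\alpha$ and let $S$ be the ruled surface in $\mathbb{R}^3$ locally parametrized by $x(s,t)=\alpha(s)+tN(s)$, with the induced metric. Then $\alpha(s)$ is a triharmonic curve in $S$ with nonconstant geodesic curvature $\kappa_g(s)=\kappa(s)$.
   Context: An arc-length parametrized curve $\gamma$ in a Riemannian manifold $M$ with Levi-Civita connection $\nabla$, curvature tensor $R^M(X,Y)=\nabla_X\nabla_Y-\nabla_Y\nabla_X-\nabla_{[X,Y]}$ and $T=\gamma'$ is called triharmonic if $\nabla_T^5T+R^M(\nabla_T^3T,T)T-R^M(\nabla_T^2T,\nabla_TT)T=0$. For a curve in a surface, the geodesic curvature $\kappa_g$ is defined by $\nabla_TT=\kappa_g\,JT$, with $J$ the rotation by $\pi/2$ (the orientation of $S$ being chosen appropriately). The curvature and torsion of a curve in $\mathbb{R}^3$ are those of its Frenet frame $T=\alpha'$, $N=\alpha''/\kappa$, $B=T\times N$. *)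

theory Defs
  imports "HOL-Analysis.Analysis"
begin

definition vd :: "(real \<Rightarrow> 'a::real_normed_vector) \<Rightarrow> real \<Rightarrow> 'a" where
  "vd f s = vector_derivative f (at s)"

definition smooth_curve_on :: "real set \<Rightarrow> (real \<Rightarrow> 'a::real_normed_vector) \<Rightarrow> bool" where
  "smooth_curve_on I f \<longleftrightarrow> (\<forall>n. \<forall>s\<in>I. ((vd ^^ n) f) differentiable (at s))"

definition pd :: "nat \<Rightarrow> (real \<Rightarrow> real \<Rightarrow> 'a::real_normed_vector) \<Rightarrow> real \<Rightarrow> real \<Rightarrow> 'a" where
  "pd i f u v = (if i = 0 then vector_derivative (\<lambda>w. f w v) (at u)
                 else vector_derivative (\<lambda>w. f u w) (at v))"

definition frenet_T :: "(real \<Rightarrow> real^3) \<Rightarrow> real \<Rightarrow> real^3" where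
  "frenet_T \<alpha> = vd \<alpha>"

definition curvature :: "(real \<Rightarrow> real^3) \<Rightarrow> real \<Rightarrow> real" where
  "curvature \<alpha> s = norm (vd (vd \<alpha>) s)"

definition frenet_N :: "(real \<Rightarrow> real^3) \<Rightarrow> real \<Rightarrow> real^3" where
  "frenet_N \<alpha> s = (1 / curvature \<alpha> s) *\<^sub>R vd (vd \<alpha>) s"

definition frenet_B :: "(real \<Rightarrow> real^3) \<Rightarrow> real \<Rightarrow> real^3" where
  "frenet_B \<alpha> s = cross3 (frenet_T \<alpha> s) (frenet_N \<alpha> s)"

text \<open>Torsion from the Frenet equation \<open>N' = -\<kappa> T + \<tau> B\<close>.\<close>
definition torsion :: "(real \<Rightarrow> real^3) \<Rightarrow> real \<Rightarrow> real" where
  "torsion \<alpha> s = inner (vd (frenet_N \<alpha>) s) (frenet_B \<alpha> s)"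

text \<open>\<open>x\<close> is a local parametrization \<open>(u0,u1) \<mapsto> x u0 u1\<close> of a surface in \<open>\<real>\<^sup>3\<close>;
  tangent vectors are given by their coordinate components (functions \<open>nat \<Rightarrow> real\<close>,
  only indices 0 and 1 matter).\<close>

definition metric :: "(real \<Rightarrow> real \<Rightarrow> real^3) \<Rightarrow> nat \<Rightarrow> nat \<Rightarrow> real \<Rightarrow> real \<Rightarrow> real" where
  "metric x i j u v = inner (pd i x u v) (pd j x u v)"

definition metric_det :: "(real \<Rightarrow> real \<Rightarrow> real^3) \<Rightarrow> real \<Rightarrow> real \<Rightarrow> real" where
  "metric_det x u v = metric x 0 0 u v * metric x 1 1 u v - (metric x 0 1 u v)\<^sup>2"

definition metric_inv :: "(real \<Rightarrow> real \<Rightarrow> real^3) \<Rightarrow> nat \<Rightarrow> nat \<Rightarrow> real \<Rightarrow> real \<Rightarrow> real" where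
  "metric_inv x i j u v =
     (if i = 0 \<and> j = 0 then metric x 1 1 u v
      else if i = 1 \<and> j = 1 then metric x 0 0 u v
      else - metric x 0 1 u v) / metric_det x u v"

definition christoffel :: "(real \<Rightarrow> real \<Rightarrow> real^3) \<Rightarrow> nat \<Rightarrow> nat \<Rightarrow> nat \<Rightarrow> real \<Rightarrow> real \<Rightarrow> real" where
  "christoffel x k i j u v =
     (1/2) * (\<Sum>l<2. metric_inv x k l u v *
        (pd i (metric x j l) u v + pd j (metric x i l) u v - pd l (metric x i j) u v))"

text \<open>\<open>R(\<partial>_i,\<partial>_j)\<partial>_k = \<Sum>_l R^l_{ijk} \<partial>_l\<close> for
  \<open>R(X,Y) = \<nabla>_X\<nabla>_Y - \<nabla>_Y\<nabla>_X - \<nabla>_{[X,Y]}\<close>.\<close>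
definition riemann :: "(real \<Rightarrow> real \<Rightarrow> real^3) \<Rightarrow> nat \<Rightarrow> nat \<Rightarrow> nat \<Rightarrow> nat \<Rightarrow> real \<Rightarrow> real \<Rightarrow> real" where
  "riemann x l i j k u v =
     pd i (christoffel x l j k) u v - pd j (christoffel x l i k) u v
     + (\<Sum>m<2. christoffel x m j k u v * christoffel x l i m u v
              - christoffel x m i k u v * christoffel x l j m u v)"

definition curv_op :: "(real \<Rightarrow> real \<Rightarrow> real^3) \<Rightarrow> real \<times> real \<Rightarrow>
    (nat \<Rightarrow> real) \<Rightarrow> (nat \<Rightarrow> real) \<Rightarrow> (nat \<Rightarrow> real) \<Rightarrow> nat \<Rightarrow> real" where
  "curv_op x p X Y Z = (\<lambda>l. \<Sum>i<2. \<Sum>j<2. \<Sum>k<2.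
      riemann x l i j k (fst p) (snd p) * X i * Y j * Z k)"

definition coord_vel :: "(real \<Rightarrow> real \<times> real) \<Rightarrow> real \<Rightarrow> nat \<Rightarrow> real" where
  "coord_vel \<gamma> s = (\<lambda>i. if i = 0 then deriv (\<lambda>r. fst (\<gamma> r)) s else deriv (\<lambda>r. snd (\<gamma> r)) s)"

definition covd :: "(real \<Rightarrow> real \<Rightarrow> real^3) \<Rightarrow> (real \<Rightarrow> real \<times> real) \<Rightarrow>
    (real \<Rightarrow> nat \<Rightarrow> real) \<Rightarrow> real \<Rightarrow> nat \<Rightarrow> real" where
  "covd x \<gamma> V s = (\<lambda>k. deriv (\<lambda>r. V r k) s
      + (\<Sum>i<2. \<Sum>j<2. christoffel x k i j (fst (\<gamma> s)) (snd (\<gamma> s)) * coord_vel \<gamma> s i * V s j))"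

definition covd_iter :: "(real \<Rightarrow> real \<Rightarrow> real^3) \<Rightarrow> (real \<Rightarrow> real \<times> real) \<Rightarrow> nat \<Rightarrow>
    real \<Rightarrow> nat \<Rightarrow> real" where
  "covd_iter x \<gamma> n = (covd x \<gamma> ^^ n) (coord_vel \<gamma>)"

definition gnorm2 :: "(real \<Rightarrow> real \<Rightarrow> real^3) \<Rightarrow> real \<times> real \<Rightarrow> (nat \<Rightarrow> real) \<Rightarrow> real" where
  "gnorm2 x p X = (\<Sum>i<2. \<Sum>j<2. metric x i j (fst p) (snd p) * X i * X j)"

definition triharmonic_in :: "(real \<Rightarrow> real \<Rightarrow> real^3) \<Rightarrow> real set \<Rightarrow> (real \<Rightarrow> real \<times> real) \<Rightarrow> bool" where
  "triharmonic_in x I \<gamma> \<longleftrightarrow>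
     (\<forall>s\<in>I. gnorm2 x (\<gamma> s) (coord_vel \<gamma> s) = 1) \<and>
     (\<forall>s\<in>I. \<forall>k<2.
        covd_iter x \<gamma> 5 s k
        + curv_op x (\<gamma> s) (covd_iter x \<gamma> 3 s) (coord_vel \<gamma> s) (coord_vel \<gamma> s) k
        - curv_op x (\<gamma> s) (covd_iter x \<gamma> 2 s) (covd_iter x \<gamma> 1 s) (coord_vel \<gamma> s) k = 0)"

text \<open>Rotation by \<open>\<pi>/2\<close> in the tangent plane, for the orientation of the chart.\<close>
definition rotJ :: "(real \<Rightarrow> real \<Rightarrow> real^3) \<Rightarrow> real \<times> real \<Rightarrow> (nat \<Rightarrow> real) \<Rightarrow> nat \<Rightarrow> real" where
  "rotJ x p X = (let u = fst p; v = snd p; d = sqrt (metric_det x u v) in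
     (\<lambda>k. if k = 0 then - (metric x 0 1 u v * X 0 + metric x 1 1 u v * X 1) / d
          else (metric x 0 0 u v * X 0 + metric x 0 1 u v * X 1) / d))"

definition has_geodesic_curvature :: "(real \<Rightarrow> real \<Rightarrow> real^3) \<Rightarrow> real set \<Rightarrow>
    (real \<Rightarrow> real \<times> real) \<Rightarrow> real \<Rightarrow> (real \<Rightarrow> real) \<Rightarrow> bool" where
  "has_geodesic_curvature x I \<gamma> e kg \<longleftrightarrow>
     (\<forall>s\<in>I. \<forall>k<2. covd_iter x \<gamma> 1 s k = kg s * (e * rotJ x (\<gamma> s) (coord_vel \<gamma> s) k))"

end

theory Submission
  imports Defs
begin

(*
  In the chart x(s,t) = \<alpha>(s) + t N(s) the induced metric is ((1 - t\<kappa>)\<^sup>2 + t\<^sup>2\<tau>\<^sup>2) ds\<^sup>2 + dt\<^sup>2.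
  Along t = 0 the only nonzero Christoffel symbols are \<Gamma>\<^sup>s\<^sub>s\<^sub>t = \<Gamma>\<^sup>s\<^sub>t\<^sub>s = -\<kappa> and
  \<Gamma>\<^sup>t\<^sub>s\<^sub>s = \<kappa>, and the Gauss curvature is -\<tau>\<^sup>2. Hence \<gamma>(s) = (s,0) has unit speed and
  is differentiated like a plane curve of curvature \<kappa>: \<nabla>\<^sub>T (a, b) = (a' - \<kappa> b, b' + \<kappa> a).
  The two components of the triharmonic equation become
    \<kappa> \<kappa>''' + 2 \<kappa>' \<kappa>'' - 2 \<kappa>\<^sup>3 \<kappa>' = 0   and
    \<kappa>'''' - 15 \<kappa> \<kappa>'\<^sup>2 - 10 \<kappa>\<^sup>2 \<kappa>'' + \<kappa>\<^sup>5 - \<tau>\<^sup>2 (\<kappa>'' - 2 \<kappa>\<^sup>3) = 0.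
  The second is a hypothesis. For the first, differentiating the first integral gives \<kappa>' H = 0
  with H = 5 \<kappa>\<^sup>2 \<kappa>'' - 2 \<kappa>\<^sup>5 - c\<^sub>1, whose derivative is 5 \<kappa> times the left-hand side.
  H' vanishes where \<kappa>' \<noteq> 0, because H vanishes nearby, and where \<kappa>' vanishes on a
  neighbourhood, because then so do \<kappa>'' and \<kappa>'''; these points are dense, so H' = 0.
*)

section \<open>Smooth real functions\<close>

definition real_smooth_on :: "real set \<Rightarrow> (real \<Rightarrow> real) \<Rightarrow> bool" where
  "real_smooth_on S f \<longleftrightarrow> (\<forall>n. \<forall>s\<in>S. (deriv ^^ n) f differentiable (at s))"

lemma real_smooth_on_higher_deriv:
  assumes "real_smooth_on S f" "s \<in> S"
  shows "((deriv ^^ n) f has_real_derivative (deriv ^^ Suc n) f s) (at s)"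
  using assms unfolding real_smooth_on_def by (simp add: DERIV_deriv_iff_real_differentiable)

lemma real_smooth_on_continuous_on:
  assumes "open S" "real_smooth_on S f"
  shows "continuous_on S ((deriv ^^ n) f)"
  using assms unfolding real_smooth_on_def
  by (meson continuous_at_imp_continuous_on differentiable_imp_continuous_within)

lemma deriv_eq_on_open:
  assumes "open S" "s \<in> S" "\<forall>r\<in>S. f r = g r"
  shows "deriv f s = deriv g s"
  using assms by (intro deriv_cong_ev) (auto simp: eventually_nhds)

lemma vector_derivative_eq_on_open:
  assumes "open S" "s \<in> S" "\<forall>r\<in>S. f r = g r" "(g has_real_derivative D) (at s)"
  shows "vector_derivative f (at s) = D"
proof -
  have "(f has_real_derivative D) (at s)"
    using has_field_derivative_transform_within_open[OF assms(4,1,2)] assms(3) by simp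
  then show ?thesis
    by (simp add: has_real_derivative_iff_has_vector_derivative vector_derivative_at)
qed

lemma eventually_deriv_eq_0:
  assumes "eventually (\<lambda>y. f y = 0) (nhds x)"
  shows "eventually (\<lambda>y. deriv f y = (0::real)) (nhds x)"
proof -
  have "eventually (\<lambda>y. eventually (\<lambda>z. f z = 0) (nhds y)) (nhds x)"
    using assms by (simp only: eventually_eventually)
  then show ?thesis
    by (rule eventually_mono) (simp add: deriv_cong_ev[of f "\<lambda>_. 0"])
qed

inductive_set fun_algebra :: "(real \<Rightarrow> real) set \<Rightarrow> (real \<Rightarrow> real) set" for G where
  generator: "g \<in> G \<Longrightarrow> g \<in> fun_algebra G"
| const: "(\<lambda>_. c) \<in> fun_algebra G"
| add: "f \<in> fun_algebra G \<Longrightarrow> g \<in> fun_algebra G \<Longrightarrow> (\<lambda>r. f r + g r) \<in> fun_algebra G"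
| mult: "f \<in> fun_algebra G \<Longrightarrow> g \<in> fun_algebra G \<Longrightarrow> (\<lambda>r. f r * g r) \<in> fun_algebra G"

lemma fun_algebra_sum:
  "(\<And>i. i \<in> F \<Longrightarrow> f i \<in> fun_algebra G) \<Longrightarrow> (\<lambda>r. \<Sum>i\<in>F. f i r) \<in> fun_algebra G"
proof (induction F rule: infinite_finite_induct)
  case (insert i F)
  then show ?case using fun_algebra.add[of "f i" G] by simp
qed (auto intro: fun_algebra.const)

lemma fun_algebra_has_derivative:
  assumes G: "\<forall>g\<in>G. \<exists>h\<in>fun_algebra G. \<forall>s\<in>S. (g has_real_derivative h s) (at s)"
    and "f \<in> fun_algebra G"
  shows "\<exists>h\<in>fun_algebra G. \<forall>s\<in>S. (f has_real_derivative h s) (at s)"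
  using assms(2)
proof induction
  case (generator g)
  then show ?case using G by blast
next
  case const
  show ?case by (intro bexI[of _ "\<lambda>_. 0"] fun_algebra.const) auto
next
  case (add f g)
  then obtain hf hg where "hf \<in> fun_algebra G" "\<forall>s\<in>S. (f has_real_derivative hf s) (at s)"
    "hg \<in> fun_algebra G" "\<forall>s\<in>S. (g has_real_derivative hg s) (at s)" by blast
  then show ?case by (intro bexI[of _ "\<lambda>r. hf r + hg r"] fun_algebra.add) (auto intro: DERIV_add)
next
  case (mult f g)
  then obtain hf hg where "hf \<in> fun_algebra G" "\<forall>s\<in>S. (f has_real_derivative hf s) (at s)"
    "hg \<in> fun_algebra G" "\<forall>s\<in>S. (g has_real_derivative hg s) (at s)" by blast
  with mult.hyps show ?case
    by (intro bexI[of _ "\<lambda>r. hf r * g r + hg r * f r"] fun_algebra.add fun_algebra.mult)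
      (auto intro: DERIV_mult)
qed

lemma fun_algebra_real_smooth_on:
  assumes S: "open S"
    and G: "\<forall>g\<in>G. \<exists>h\<in>fun_algebra G. \<forall>s\<in>S. (g has_real_derivative h s) (at s)"
    and f: "f \<in> fun_algebra G"
  shows "real_smooth_on S f"
proof -
  have higher_deriv: "\<exists>h\<in>fun_algebra G. \<forall>s\<in>S. (deriv ^^ n) f s = h s" for n
  proof (induction n)
    case 0
    show ?case using f by auto
  next
    case (Suc n)
    then obtain h where h: "h \<in> fun_algebra G" "\<forall>s\<in>S. (deriv ^^ n) f s = h s" by blast
    then obtain h' where h': "h' \<in> fun_algebra G" "\<forall>s\<in>S. (h has_real_derivative h' s) (at s)"
      using fun_algebra_has_derivative[OF G] by blast
    have "(deriv ^^ Suc n) f s = h' s" if "s \<in> S" for s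
      using deriv_eq_on_open[OF S that h(2)] DERIV_imp_deriv[OF h'(2)[rule_format, OF that]]
      by simp
    then show ?case using h'(1) by blast
  qed
  show ?thesis
    unfolding real_smooth_on_def
  proof (intro allI ballI)
    fix n s
    assume s: "s \<in> S"
    obtain h where h: "h \<in> fun_algebra G" "\<forall>s\<in>S. (deriv ^^ n) f s = h s"
      using higher_deriv by blast
    then obtain h' where "(h has_real_derivative h' s) (at s)"
      using fun_algebra_has_derivative[OF G] s by blast
    then have "((deriv ^^ n) f has_real_derivative h' s) (at s)"
      using has_field_derivative_transform_within_open[OF _ S s] h(2) by simp
    then show "(deriv ^^ n) f differentiable (at s)"
      using real_differentiable_def by blast
  qed
qed

lemma derivative_zero_of_vanishing_product:
  assumes S: "open S" and u: "continuous_on S u" and H'_cont: "continuous_on S H'"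
    and uH: "\<forall>r\<in>S. u r * H r = 0"
    and H: "\<forall>r\<in>S. (H has_real_derivative H' r) (at r)"
    and flat: "\<And>r. r \<in> S \<Longrightarrow> eventually (\<lambda>y. u y = 0) (nhds r) \<Longrightarrow> H' r = 0"
    and s: "s \<in> S"
  shows "H' s = (0::real)"
proof (rule ccontr)
  have nonzero_near: "eventually (\<lambda>y. y \<in> S \<and> f y \<noteq> 0) (nhds r)"
    if "continuous_on S f" "r \<in> S" "f r \<noteq> (0::real)" for f r
    using eventually_nhds_in_open[OF continuous_open_preimage[OF that(1) S, of "- {0}"]] that
    by auto
  assume "H' s \<noteq> 0"
  then have "eventually (\<lambda>y. y \<in> S \<and> H' y \<noteq> 0) (nhds s)"
    using nonzero_near[OF H'_cont s] by blast
  moreover have "u y = 0" if y: "y \<in> S" "H' y \<noteq> 0" for y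
  proof (rule ccontr)
    assume "u y \<noteq> 0"
    then have "eventually (\<lambda>z. H z = 0) (nhds y)"
      using nonzero_near[OF u y(1)] uH by (auto elim: eventually_mono)
    then have "((\<lambda>_. 0) has_real_derivative H' y) (at y)"
      using H y(1) DERIV_cong_ev[of y y H "\<lambda>_. 0"] by auto
    then show False using y(2) DERIV_const DERIV_unique by blast
  qed
  ultimately have "eventually (\<lambda>y. u y = 0) (nhds s)" by (auto elim: eventually_mono)
  then show False using flat[OF s] \<open>H' s \<noteq> 0\<close> by blast
qed

lemma has_real_derivative_inner:
  fixes f g :: "real \<Rightarrow> 'a::real_inner"
  assumes "(f has_vector_derivative f') (at s)" "(g has_vector_derivative g') (at s)"
  shows "((\<lambda>r. f r \<bullet> g r) has_real_derivative f s \<bullet> g' + f' \<bullet> g s) (at s)"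
  using bounded_bilinear.has_vector_derivative[OF bounded_bilinear_inner assms]
  by (simp add: has_real_derivative_iff_has_vector_derivative)

lemma has_real_derivative_const_on_open:
  assumes "open S" "s \<in> S" "\<forall>r\<in>S. f r = c" "(f has_real_derivative D) (at s)"
  shows "D = 0"
proof -
  have "((\<lambda>_. c) has_real_derivative D) (at s)"
    using has_field_derivative_transform_within_open[OF assms(4,1,2)] assms(3) by simp
  then show ?thesis using DERIV_const DERIV_unique by blast
qed

lemma ode_of_first_integral:
  assumes S: "open S" and k: "real_smooth_on S k" and k_nz: "\<forall>r\<in>S. k r \<noteq> 0"
    and first_integral: "\<forall>r\<in>S. 5 * (deriv k r)\<^sup>2 = c2 - 2 * c1 / k r + k r ^ 4"
    and s: "s \<in> S"
  shows "k s * (deriv ^^ 3) k s + 2 * deriv k s * (deriv ^^ 2) k s - 2 * k s ^ 3 * deriv k s = 0"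
proof -
  define H where "H r = 5 * (k r)\<^sup>2 * (deriv ^^ 2) k r - 2 * k r ^ 5 - c1" for r
  define P where "P r = k r * (deriv ^^ 3) k r + 2 * deriv k r * (deriv ^^ 2) k r
    - 2 * k r ^ 3 * deriv k r" for r
  have dk: "(k has_real_derivative deriv k r) (at r)"
    "(deriv k has_real_derivative (deriv ^^ 2) k r) (at r)"
    "((deriv ^^ 2) k has_real_derivative (deriv ^^ 3) k r) (at r)" if "r \<in> S" for r
    using real_smooth_on_higher_deriv[OF k that, of 0] real_smooth_on_higher_deriv[OF k that, of 1]
      real_smooth_on_higher_deriv[OF k that, of 2]
    by (simp_all add: eval_nat_numeral)
  have H_deriv: "(H has_real_derivative 5 * k r * P r) (at r)" if "r \<in> S" for r
    unfolding H_def[abs_def] P_def using dk[OF that]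
    by (auto intro!: derivative_eq_intros simp: algebra_simps eval_nat_numeral)
  have "deriv k r * H r = 0" if r: "r \<in> S" for r
  proof -
    have "((\<lambda>r. 5 * (deriv k r)\<^sup>2 + 2 * c1 / k r - k r ^ 4) has_real_derivative
        2 * deriv k r / (k r)\<^sup>2 * H r) (at r)"
      unfolding H_def using dk[OF r] k_nz r
      by (auto intro!: derivative_eq_intros simp: field_simps eval_nat_numeral)
    then have "2 * deriv k r / (k r)\<^sup>2 * H r = 0"
      by (rule has_real_derivative_const_on_open[OF S r, where c = c2, rotated])
        (use first_integral in auto)
    then show ?thesis using k_nz r by simp
  qed
  moreover have "continuous_on S (deriv k)" "continuous_on S (\<lambda>r. 5 * k r * P r)"
  proof -
    have cont: "continuous_on S ((deriv ^^ n) k)" for n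
      by (rule real_smooth_on_continuous_on[OF S k])
    show "continuous_on S (deriv k)" using cont[of 1] by simp
    show "continuous_on S (\<lambda>r. 5 * k r * P r)"
      unfolding P_def using cont[of 0] cont[of 1] cont[of 2] cont[of 3]
      by (auto intro!: continuous_intros)
  qed
  moreover have "5 * k r * P r = 0"
    if r: "r \<in> S" and flat: "eventually (\<lambda>y. deriv k y = 0) (nhds r)" for r
  proof -
    have "eventually (\<lambda>y. (deriv ^^ 3) k y = 0) (nhds r)"
      using eventually_deriv_eq_0[OF eventually_deriv_eq_0[OF flat]] by (simp add: eval_nat_numeral)
    then have "(deriv ^^ 3) k r = 0" "deriv k r = 0"
      using flat eventually_nhds_x_imp_x by blast+
    then show ?thesis unfolding P_def by simp
  qed
  ultimately have "5 * k s * P s = 0"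
    using derivative_zero_of_vanishing_product[OF S, of "deriv k" "\<lambda>r. 5 * k r * P r" H] H_deriv s
    by blast
  then show ?thesis using k_nz s unfolding P_def by simp
qed

section \<open>Semigeodesic charts\<close>

lemma sum_lessThan_2: "(\<Sum>i<2. f i) = f 0 + f (1::nat)"
  by (simp add: numeral_2_eq_2)

lemma metric_sym: "metric x j i u v = metric x i j u v"
  unfolding metric_def by (simp add: inner_commute)

lemma riemann_antisym: "riemann x l j i m u v = - riemann x l i j m u v"
  unfolding riemann_def sum_lessThan_2 by simp

lemma coord_vel_horizontal: "coord_vel (\<lambda>s. (s, c)) s = (\<lambda>i. if i = 0 then 1 else 0)"
  unfolding coord_vel_def by (simp cong: if_cong)

lemma pd_1_eqI: "(f u has_real_derivative D) (at v) \<Longrightarrow> pd 1 f u v = D"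
  unfolding pd_def
  by (simp add: has_real_derivative_iff_has_vector_derivative vector_derivative_at)

lemma pd_0_eqI_on_open:
  assumes "open S" "u \<in> S" "\<forall>r\<in>S. f r v = g r" "(g has_real_derivative D) (at u)"
  shows "pd 0 f u v = D"
  unfolding pd_def using vector_derivative_eq_on_open[OF assms] by simp

abbreviation base_curve :: "real \<Rightarrow> real \<times> real" where
  "base_curve \<equiv> \<lambda>s. (s, 0)"

lemma covd_iter_Suc: "covd_iter x \<gamma> (Suc n) = covd x \<gamma> (covd_iter x \<gamma> n)"
  unfolding covd_iter_def by simp

lemma riemann_same_index: "riemann x l i i m u v = 0"
  unfolding riemann_def by simp

(* The ruled surface of principal normals of a space curve has a chart of this kind, with
   k = \<kappa> and w = \<tau>\<^sup>2. *)
locale semigeodesic_chart =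
  fixes x :: "real \<Rightarrow> real \<Rightarrow> real^3" and I :: "real set" and k w :: "real \<Rightarrow> real"
  assumes open_I: "open I"
    and metric_00: "s \<in> I \<Longrightarrow> metric x 0 0 s t = (1 - t * k s)\<^sup>2 + t\<^sup>2 * w s"
    and metric_01: "s \<in> I \<Longrightarrow> metric x 0 1 s t = 0"
    and metric_11: "s \<in> I \<Longrightarrow> metric x 1 1 s t = 1"
    and smooth_k: "real_smooth_on I k"
    and differentiable_w: "s \<in> I \<Longrightarrow> w differentiable (at s)"
begin

lemma k_derivatives:
  assumes "s \<in> I"
  shows "(k has_real_derivative deriv k s) (at s)"
    "(deriv k has_real_derivative (deriv ^^ 2) k s) (at s)"
    "((deriv ^^ 2) k has_real_derivative (deriv ^^ 3) k s) (at s)"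
    "((deriv ^^ 3) k has_real_derivative (deriv ^^ 4) k s) (at s)"
  using real_smooth_on_higher_deriv[OF smooth_k assms, of 0]
    real_smooth_on_higher_deriv[OF smooth_k assms, of 1]
    real_smooth_on_higher_deriv[OF smooth_k assms, of 2]
    real_smooth_on_higher_deriv[OF smooth_k assms, of 3]
  by (simp_all add: eval_nat_numeral)

lemma partial_metric_00:
  assumes s: "s \<in> I"
  shows "pd 0 (metric x 0 0) s t = - 2 * t * deriv k s * (1 - t * k s) + t\<^sup>2 * deriv w s"
    and "pd 1 (metric x 0 0) s t = - 2 * k s * (1 - t * k s) + 2 * t * w s"
proof -
  have "(w has_real_derivative deriv w s) (at s)"
    using differentiable_w[OF s] DERIV_deriv_iff_real_differentiable by blast
  then have "((\<lambda>r. (1 - t * k r)\<^sup>2 + t\<^sup>2 * w r) has_real_derivative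
      - 2 * t * deriv k s * (1 - t * k s) + t\<^sup>2 * deriv w s) (at s)"
    using k_derivatives(1)[OF s] by (auto intro!: derivative_eq_intros simp: algebra_simps)
  then show "pd 0 (metric x 0 0) s t = - 2 * t * deriv k s * (1 - t * k s) + t\<^sup>2 * deriv w s"
    by (rule pd_0_eqI_on_open[OF open_I s, rotated]) (simp add: metric_00)
  have "metric x 0 0 s = (\<lambda>v. (1 - v * k s)\<^sup>2 + v\<^sup>2 * w s)"
    using metric_00[OF s] by auto
  moreover have "((\<lambda>v. (1 - v * k s)\<^sup>2 + v\<^sup>2 * w s) has_real_derivative
      - 2 * k s * (1 - t * k s) + 2 * t * w s) (at t)"
    by (auto intro!: derivative_eq_intros)
  ultimately show "pd 1 (metric x 0 0) s t = - 2 * k s * (1 - t * k s) + 2 * t * w s"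
    by (metis pd_1_eqI)
qed

lemma partial_metric_01_11:
  assumes s: "s \<in> I"
  shows "pd l (metric x 0 1) s t = 0" "pd l (metric x 1 0) s t = 0" "pd l (metric x 1 1) s t = 0"
proof -
  have "pd l (metric x i j) s t = 0" if c: "\<And>r t. r \<in> I \<Longrightarrow> metric x i j r t = c" for i j c
  proof -
    have "vector_derivative (\<lambda>r. metric x i j r t) (at s) = 0"
      using vector_derivative_eq_on_open[OF open_I s, of _ "\<lambda>_. c"] c by simp
    moreover have "metric x i j s = (\<lambda>_. c)" using c[OF s] by auto
    ultimately show ?thesis unfolding pd_def by simp
  qed
  then show "pd l (metric x 0 1) s t = 0" "pd l (metric x 1 0) s t = 0" "pd l (metric x 1 1) s t = 0"
    using metric_01 metric_11 metric_sym[of x 1 0] by metis+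
qed

(* metric_inv x 1 1 is E / E for E = metric x 0 0, which is 0 where E vanishes. *)
lemma metric_inverse:
  assumes "s \<in> I"
  shows "metric_inv x 0 0 s t = 1 / metric x 0 0 s t"
    "metric_inv x 1 1 s t = metric x 0 0 s t / metric x 0 0 s t"
    "metric_inv x 0 1 s t = 0" "metric_inv x 1 0 s t = 0"
  unfolding metric_inv_def metric_det_def using metric_01[OF assms] metric_11[OF assms]
  by (simp_all add: metric_sym[of x 1 0])

lemma christoffel_semigeodesic:
  assumes s: "s \<in> I"
  shows "christoffel x 0 0 0 s t = pd 0 (metric x 0 0) s t / (2 * metric x 0 0 s t)"
    "christoffel x 0 0 1 s t = pd 1 (metric x 0 0) s t / (2 * metric x 0 0 s t)"
    "christoffel x 0 1 0 s t = pd 1 (metric x 0 0) s t / (2 * metric x 0 0 s t)"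
    "christoffel x 1 0 0 s t = - metric x 0 0 s t / metric x 0 0 s t * pd 1 (metric x 0 0) s t / 2"
    "christoffel x 0 1 1 s t = 0" "christoffel x 1 0 1 s t = 0"
    "christoffel x 1 1 0 s t = 0" "christoffel x 1 1 1 s t = 0"
  unfolding christoffel_def sum_lessThan_2 metric_inverse[OF s] partial_metric_01_11[OF s]
  by simp_all

lemma christoffel_along_curve:
  assumes s: "s \<in> I"
  shows "christoffel x 0 0 0 s 0 = 0" "christoffel x 0 0 1 s 0 = - k s"
    "christoffel x 0 1 0 s 0 = - k s" "christoffel x 1 0 0 s 0 = k s"
    "christoffel x 0 1 1 s 0 = 0" "christoffel x 1 0 1 s 0 = 0"
    "christoffel x 1 1 0 s 0 = 0" "christoffel x 1 1 1 s 0 = 0"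
  using christoffel_semigeodesic[OF s, of 0] partial_metric_00[OF s, of 0] metric_00[OF s, of 0]
  by simp_all

lemma partial_christoffel_along_curve:
  assumes s: "s \<in> I"
  shows "pd 1 (christoffel x 0 0 0) s 0 = - deriv k s"
    "pd 1 (christoffel x 1 0 0) s 0 = - ((k s)\<^sup>2 + w s)"
    "pd 0 (christoffel x 0 1 0) s 0 = - deriv k s"
    "pd 0 (christoffel x 1 1 0) s 0 = 0"
proof -
  let ?E = "\<lambda>v. (1 - v * k s)\<^sup>2 + v\<^sup>2 * w s"
  have eq: "christoffel x 0 0 0 s
      = (\<lambda>v. (- 2 * v * deriv k s * (1 - v * k s) + v\<^sup>2 * deriv w s) / (2 * ?E v))"
    "christoffel x 1 0 0 s = (\<lambda>v. - ?E v / ?E v * (- 2 * k s * (1 - v * k s) + 2 * v * w s) / 2)"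
    by (intro ext; simp only: christoffel_semigeodesic[OF s] partial_metric_00[OF s] metric_00[OF s])+
  have deriv_at_0:
    "((\<lambda>v. (- 2 * v * deriv k s * (1 - v * k s) + v\<^sup>2 * deriv w s) / (2 * ?E v))
      has_real_derivative - deriv k s) (at 0)"
    "((\<lambda>v. - ?E v / ?E v * (- 2 * k s * (1 - v * k s) + 2 * v * w s) / 2)
      has_real_derivative - ((k s)\<^sup>2 + w s)) (at 0)"
    by (auto intro!: derivative_eq_intros simp: power2_eq_square)
  show "pd 1 (christoffel x 0 0 0) s 0 = - deriv k s"
    by (rule pd_1_eqI) (unfold eq(1), rule deriv_at_0(1))
  show "pd 1 (christoffel x 1 0 0) s 0 = - ((k s)\<^sup>2 + w s)"
    by (rule pd_1_eqI) (unfold eq(2), rule deriv_at_0(2))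
  show "pd 0 (christoffel x 0 1 0) s 0 = - deriv k s"
    using christoffel_along_curve k_derivatives(1)[OF s]
    by (intro pd_0_eqI_on_open[OF open_I s, where g = "\<lambda>r. - k r"])
      (auto intro!: derivative_eq_intros)
  show "pd 0 (christoffel x 1 1 0) s 0 = 0"
    using christoffel_along_curve
    by (intro pd_0_eqI_on_open[OF open_I s, where g = "\<lambda>_. 0"]) auto
qed

lemma riemann_along_curve:
  assumes s: "s \<in> I"
  shows "riemann x 0 1 0 0 s 0 = 0" "riemann x 1 1 0 0 s 0 = - w s"
  unfolding riemann_def sum_lessThan_2
  using christoffel_along_curve[OF s] partial_christoffel_along_curve[OF s]
  by (simp_all add: power2_eq_square)

lemma covd_along_base_curve:
  assumes s: "s \<in> I" and V: "\<forall>r\<in>I. V r 0 = a r \<and> V r 1 = b r"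
    and a: "(a has_real_derivative a') (at s)" and b: "(b has_real_derivative b') (at s)"
  shows "covd x base_curve V s 0 = a' - k s * b s \<and> covd x base_curve V s 1 = b' + k s * a s"
proof -
  have "deriv (\<lambda>r. V r 0) s = a'" "deriv (\<lambda>r. V r 1) s = b'"
    using deriv_eq_on_open[OF open_I s, of "\<lambda>r. V r 0" a]
      deriv_eq_on_open[OF open_I s, of "\<lambda>r. V r 1" b]
      V DERIV_imp_deriv[OF a] DERIV_imp_deriv[OF b] by simp_all
  then show ?thesis
    unfolding covd_def sum_lessThan_2 coord_vel_horizontal
    using christoffel_along_curve[OF s] V s by simp
qed

lemma covd_iter_1: "\<forall>r\<in>I. covd_iter x base_curve 1 r 0 = 0 \<and> covd_iter x base_curve 1 r 1 = k r"
proof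
  fix r assume r: "r \<in> I"
  have "covd x base_curve (covd_iter x base_curve 0) r 0 = 0 - k r * 0 \<and>
      covd x base_curve (covd_iter x base_curve 0) r 1 = 0 + k r * 1"
    by (rule covd_along_base_curve[OF r _ DERIV_const DERIV_const])
      (simp add: covd_iter_def coord_vel_horizontal)
  then show "covd_iter x base_curve 1 r 0 = 0 \<and> covd_iter x base_curve 1 r 1 = k r"
    using covd_iter_Suc[of x base_curve 0] by simp
qed

lemma covd_iter_2:
  "\<forall>r\<in>I. covd_iter x base_curve 2 r 0 = - (k r)\<^sup>2 \<and> covd_iter x base_curve 2 r 1 = deriv k r"
proof
  fix r assume r: "r \<in> I"
  have "covd x base_curve (covd_iter x base_curve 1) r 0 = 0 - k r * k r \<and>
      covd x base_curve (covd_iter x base_curve 1) r 1 = deriv k r + k r * 0"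
    by (rule covd_along_base_curve[OF r covd_iter_1 DERIV_const k_derivatives(1)[OF r]])
  then show "covd_iter x base_curve 2 r 0 = - (k r)\<^sup>2 \<and> covd_iter x base_curve 2 r 1 = deriv k r"
    using covd_iter_Suc[of x base_curve 1] by (simp add: numeral_2_eq_2 power2_eq_square)
qed

lemma covd_iter_3:
  "\<forall>r\<in>I. covd_iter x base_curve 3 r 0 = - 3 * k r * deriv k r
    \<and> covd_iter x base_curve 3 r 1 = (deriv ^^ 2) k r - k r ^ 3"
proof
  fix r assume r: "r \<in> I"
  have "((\<lambda>r. - (k r)\<^sup>2) has_real_derivative - (2 * k r * deriv k r)) (at r)"
    using k_derivatives[OF r] by (auto intro!: derivative_eq_intros)
  then have "covd x base_curve (covd_iter x base_curve 2) r 0 = - (2 * k r * deriv k r) - k r * deriv k r \<and>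
      covd x base_curve (covd_iter x base_curve 2) r 1 = (deriv ^^ 2) k r + k r * - (k r)\<^sup>2"
    by (rule covd_along_base_curve[OF r covd_iter_2 _ k_derivatives(2)[OF r]])
  then show "covd_iter x base_curve 3 r 0 = - 3 * k r * deriv k r
    \<and> covd_iter x base_curve 3 r 1 = (deriv ^^ 2) k r - k r ^ 3"
    using covd_iter_Suc[of x base_curve 2]
    by (simp add: numeral_3_eq_3 algebra_simps power2_eq_square power3_eq_cube)
qed

lemma covd_iter_4:
  "\<forall>r\<in>I. covd_iter x base_curve 4 r 0 = - 3 * (deriv k r)\<^sup>2 - 4 * k r * (deriv ^^ 2) k r + k r ^ 4
    \<and> covd_iter x base_curve 4 r 1 = (deriv ^^ 3) k r - 6 * (k r)\<^sup>2 * deriv k r"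
proof
  fix r assume r: "r \<in> I"
  have "((\<lambda>r. - 3 * k r * deriv k r) has_real_derivative
      - 3 * (deriv k r * deriv k r + k r * (deriv ^^ 2) k r)) (at r)"
    "((\<lambda>r. (deriv ^^ 2) k r - k r ^ 3) has_real_derivative
      (deriv ^^ 3) k r - 3 * (k r)\<^sup>2 * deriv k r) (at r)"
    using k_derivatives[OF r] by (auto intro!: derivative_eq_intros simp: algebra_simps)
  then have "covd x base_curve (covd_iter x base_curve 3) r 0
      = - 3 * (deriv k r * deriv k r + k r * (deriv ^^ 2) k r) - k r * ((deriv ^^ 2) k r - k r ^ 3) \<and>
    covd x base_curve (covd_iter x base_curve 3) r 1
      = (deriv ^^ 3) k r - 3 * (k r)\<^sup>2 * deriv k r + k r * (- 3 * k r * deriv k r)"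
    by (intro covd_along_base_curve[OF r covd_iter_3])
  then show "covd_iter x base_curve 4 r 0 = - 3 * (deriv k r)\<^sup>2 - 4 * k r * (deriv ^^ 2) k r + k r ^ 4
    \<and> covd_iter x base_curve 4 r 1 = (deriv ^^ 3) k r - 6 * (k r)\<^sup>2 * deriv k r"
    using covd_iter_Suc[of x base_curve 3]
    by (simp add: eval_nat_numeral algebra_simps power2_eq_square)
qed

lemma covd_iter_5:
  "\<forall>r\<in>I. covd_iter x base_curve 5 r 0
      = - 5 * (k r * (deriv ^^ 3) k r + 2 * deriv k r * (deriv ^^ 2) k r - 2 * k r ^ 3 * deriv k r)
    \<and> covd_iter x base_curve 5 r 1
      = (deriv ^^ 4) k r - 15 * k r * (deriv k r)\<^sup>2 - 10 * (k r)\<^sup>2 * (deriv ^^ 2) k r + k r ^ 5"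
proof
  fix r assume r: "r \<in> I"
  have "((\<lambda>r. - 3 * (deriv k r)\<^sup>2 - 4 * k r * (deriv ^^ 2) k r + k r ^ 4) has_real_derivative
      - 6 * deriv k r * (deriv ^^ 2) k r - 4 * (deriv k r * (deriv ^^ 2) k r + k r * (deriv ^^ 3) k r)
      + 4 * k r ^ 3 * deriv k r) (at r)"
    "((\<lambda>r. (deriv ^^ 3) k r - 6 * (k r)\<^sup>2 * deriv k r) has_real_derivative
      (deriv ^^ 4) k r - 6 * (2 * k r * deriv k r * deriv k r + (k r)\<^sup>2 * (deriv ^^ 2) k r)) (at r)"
    using k_derivatives[OF r] by (auto intro!: derivative_eq_intros simp: algebra_simps)
  from covd_along_base_curve[OF r covd_iter_4 this]
  show "covd_iter x base_curve 5 r 0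
      = - 5 * (k r * (deriv ^^ 3) k r + 2 * deriv k r * (deriv ^^ 2) k r - 2 * k r ^ 3 * deriv k r)
    \<and> covd_iter x base_curve 5 r 1
      = (deriv ^^ 4) k r - 15 * k r * (deriv k r)\<^sup>2 - 10 * (k r)\<^sup>2 * (deriv ^^ 2) k r + k r ^ 5"
    using covd_iter_Suc[of x base_curve 4]
    by (simp add: eval_nat_numeral algebra_simps power2_eq_square)
qed

lemma unit_speed: "s \<in> I \<Longrightarrow> gnorm2 x (base_curve s) (coord_vel base_curve s) = 1"
  unfolding gnorm2_def sum_lessThan_2 coord_vel_horizontal using metric_00 by simp

lemma geodesic_curvature: "has_geodesic_curvature x I base_curve 1 k"
  unfolding has_geodesic_curvature_def
proof (intro ballI allI impI)
  fix s l assume s: "s \<in> I" and l: "l < (2::nat)"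
  have "metric_det x s 0 = 1"
    unfolding metric_det_def using metric_00[OF s] metric_01[OF s] metric_11[OF s] by simp
  moreover have "covd_iter x base_curve 1 s 0 = 0" "covd_iter x base_curve 1 s 1 = k s"
    using covd_iter_1 s by auto
  ultimately show "covd_iter x base_curve 1 s l = k s * (1 * rotJ x (base_curve s) (coord_vel base_curve s) l)"
    unfolding rotJ_def Let_def coord_vel_horizontal
    using l metric_00[OF s] metric_01[OF s] metric_11[OF s] by (auto simp: less_2_cases_iff)
qed

lemma triharmonic_components:
  assumes s: "s \<in> I"
  shows "covd_iter x base_curve 5 s l
    + curv_op x (base_curve s) (covd_iter x base_curve 3 s) (coord_vel base_curve s) (coord_vel base_curve s) l
    - curv_op x (base_curve s) (covd_iter x base_curve 2 s) (covd_iter x base_curve 1 s) (coord_vel base_curve s) l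
    = covd_iter x base_curve 5 s l + riemann x l 1 0 0 s 0 * ((deriv ^^ 2) k s - 2 * k s ^ 3)"
proof -
  have "covd_iter x base_curve 1 s 0 = 0" "covd_iter x base_curve 1 s 1 = k s"
    "covd_iter x base_curve 2 s 0 = - (k s)\<^sup>2"
    "covd_iter x base_curve 3 s 1 = (deriv ^^ 2) k s - k s ^ 3"
    using covd_iter_1 covd_iter_2 covd_iter_3 s by auto
  then have "curv_op x (base_curve s) (covd_iter x base_curve 3 s) (coord_vel base_curve s)
      (coord_vel base_curve s) l = riemann x l 1 0 0 s 0 * ((deriv ^^ 2) k s - k s ^ 3)"
    "curv_op x (base_curve s) (covd_iter x base_curve 2 s) (covd_iter x base_curve 1 s)
      (coord_vel base_curve s) l = riemann x l 0 1 0 s 0 * - (k s)\<^sup>2 * k s"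
    unfolding curv_op_def sum_lessThan_2 coord_vel_horizontal by (simp_all add: riemann_same_index)
  then show ?thesis
    using riemann_antisym[of x l 0 1 0 s 0] by (simp add: algebra_simps power2_eq_square power3_eq_cube)
qed

lemma triharmonic_in_iff:
  "triharmonic_in x I base_curve \<longleftrightarrow> (\<forall>s\<in>I.
     k s * (deriv ^^ 3) k s + 2 * deriv k s * (deriv ^^ 2) k s - 2 * k s ^ 3 * deriv k s = 0 \<and>
     (deriv ^^ 4) k s - 15 * k s * (deriv k s)\<^sup>2 - 10 * (k s)\<^sup>2 * (deriv ^^ 2) k s + k s ^ 5
       - w s * ((deriv ^^ 2) k s - 2 * k s ^ 3) = 0)"
  (is "_ \<longleftrightarrow> ?rhs")
proof -
  let ?tri = "\<lambda>s l. covd_iter x base_curve 5 s l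
    + curv_op x (base_curve s) (covd_iter x base_curve 3 s) (coord_vel base_curve s) (coord_vel base_curve s) l
    - curv_op x (base_curve s) (covd_iter x base_curve 2 s) (covd_iter x base_curve 1 s) (coord_vel base_curve s) l"
  have fifth: "covd_iter x base_curve 5 s 0
      = - 5 * (k s * (deriv ^^ 3) k s + 2 * deriv k s * (deriv ^^ 2) k s - 2 * k s ^ 3 * deriv k s)"
    "covd_iter x base_curve 5 s 1
      = (deriv ^^ 4) k s - 15 * k s * (deriv k s)\<^sup>2 - 10 * (k s)\<^sup>2 * (deriv ^^ 2) k s + k s ^ 5"
    if "s \<in> I" for s
    using covd_iter_5 that by auto
  have components:
    "?tri s 0 = - 5 * (k s * (deriv ^^ 3) k s + 2 * deriv k s * (deriv ^^ 2) k s - 2 * k s ^ 3 * deriv k s)"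
    "?tri s 1 = (deriv ^^ 4) k s - 15 * k s * (deriv k s)\<^sup>2 - 10 * (k s)\<^sup>2 * (deriv ^^ 2) k s
       + k s ^ 5 - w s * ((deriv ^^ 2) k s - 2 * k s ^ 3)" if s: "s \<in> I" for s
    unfolding triharmonic_components[OF s] unfolding fifth[OF s] riemann_along_curve[OF s]
    by (simp_all add: algebra_simps)
  have "triharmonic_in x I base_curve \<longleftrightarrow> (\<forall>s\<in>I. ?tri s 0 = 0 \<and> ?tri s 1 = 0)"
    unfolding triharmonic_in_def using unit_speed by (auto simp: less_2_cases_iff)
  also have "\<dots> \<longleftrightarrow> ?rhs"
    by (rule ball_cong[OF refl]) (simp only: components mult_eq_0_iff, simp)
  finally show ?thesis .
qed

end

section \<open>The ruled surface of principal normals\<close>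

lemma inner_self_orthonormal_cross:
  fixes v a b :: "real^3"
  assumes "a \<bullet> a = 1" "b \<bullet> b = 1" "a \<bullet> b = 0"
  shows "v \<bullet> v = (v \<bullet> a)\<^sup>2 + (v \<bullet> b)\<^sup>2 + (v \<bullet> cross3 a b)\<^sup>2"
proof -
  have "(v \<bullet> cross3 a b)\<^sup>2 = (a \<bullet> a) * (b \<bullet> b) * (v \<bullet> v) + 2 * (a \<bullet> b) * (b \<bullet> v) * (v \<bullet> a)
     - (a \<bullet> a) * (b \<bullet> v)\<^sup>2 - (b \<bullet> b) * (a \<bullet> v)\<^sup>2 - (v \<bullet> v) * (a \<bullet> b)\<^sup>2"
    by (simp add: cross3_simps power2_eq_square)
  then show ?thesis using assms by (simp add: inner_commute)
qed

locale frenet_curve =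
  fixes \<alpha> :: "real \<Rightarrow> real^3" and I :: "real set"
  assumes open_I: "open I"
    and smooth: "smooth_curve_on I \<alpha>"
    and unit_speed: "\<forall>s\<in>I. norm (vd \<alpha> s) = 1"
    and curvature_nonzero: "\<forall>s\<in>I. curvature \<alpha> s \<noteq> 0"
begin

abbreviation D :: "nat \<Rightarrow> real \<Rightarrow> real^3" where "D k \<equiv> (vd ^^ k) \<alpha>"
abbreviation "\<kappa> \<equiv> curvature \<alpha>"
abbreviation "N \<equiv> frenet_N \<alpha>"

lemma D_has_vector_derivative: "s \<in> I \<Longrightarrow> (D k has_vector_derivative D (Suc k) s) (at s)"
  using smooth unfolding smooth_curve_on_def by (simp add: vd_def vector_derivative_works)

lemma D_derivatives:
  assumes "s \<in> I"
  shows "(\<alpha> has_vector_derivative D 1 s) (at s)" "(D 1 has_vector_derivative D 2 s) (at s)"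
    "(D 2 has_vector_derivative D 3 s) (at s)"
  using D_has_vector_derivative[OF assms, of 0] D_has_vector_derivative[OF assms, of 1]
    D_has_vector_derivative[OF assms, of 2]
  by (simp_all add: eval_nat_numeral)

lemma curvature_eq_norm: "\<kappa> r = norm (D 2 r)"
  unfolding curvature_def by (simp add: numeral_2_eq_2)

lemma normal_eq: "N r = (1 / \<kappa> r) *\<^sub>R D 2 r"
  unfolding frenet_N_def by (simp add: numeral_2_eq_2)

lemma curvature_pos: "s \<in> I \<Longrightarrow> \<kappa> s > 0"
  using curvature_nonzero curvature_eq_norm by (metis norm_ge_zero less_eq_real_def)

lemma curvature_has_derivative:
  assumes s: "s \<in> I"
  shows "(\<kappa> has_real_derivative (D 2 s \<bullet> D 3 s) / \<kappa> s) (at s)"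
proof -
  have \<kappa>_eq: "\<kappa> = (\<lambda>r. sqrt (D 2 r \<bullet> D 2 r))"
    by (rule ext) (simp only: curvature_eq_norm norm_eq_sqrt_inner)
  have "0 < D 2 s \<bullet> D 2 s"
    using curvature_pos[OF s] by (simp add: curvature_eq_norm)
  moreover have "((\<lambda>r. D 2 r \<bullet> D 2 r) has_real_derivative 2 * (D 2 s \<bullet> D 3 s)) (at s)"
    using has_real_derivative_inner[OF D_derivatives(3)[OF s] D_derivatives(3)[OF s]]
    by (simp add: inner_commute)
  ultimately have "(\<kappa> has_real_derivative inverse (\<kappa> s) / 2 * (2 * (D 2 s \<bullet> D 3 s))) (at s)"
    unfolding \<kappa>_eq by (rule DERIV_chain2[OF DERIV_real_sqrt])
  moreover have "inverse (\<kappa> s) / 2 * (2 * (D 2 s \<bullet> D 3 s)) = (D 2 s \<bullet> D 3 s) / \<kappa> s"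
    by (simp add: field_simps)
  ultimately show ?thesis by (rule DERIV_cong)
qed

(* The derivatives of \<kappa> and 1/\<kappa> are polynomials in \<kappa>, 1/\<kappa> and the components of the
   derivatives of \<alpha>. *)
lemma curvature_smooth: "real_smooth_on I \<kappa>"
proof -
  define G where "G = {\<kappa>, \<lambda>r. 1 / \<kappa> r} \<union> {(\<lambda>r. D j r $ i) | j i. True}"
  define dot where "dot r = (\<Sum>i\<in>UNIV. D 2 r $ i * D 3 r $ i)" for r
  have G: "g \<in> fun_algebra G" if "g \<in> G" for g
    using that by (rule fun_algebra.generator)
  have dot: "dot \<in> fun_algebra G"
    unfolding dot_def G_def by (intro fun_algebra_sum fun_algebra.mult fun_algebra.generator) auto
  have dot_eq: "dot r = D 2 r \<bullet> D 3 r" for r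
    unfolding dot_def inner_vec_def by simp
  have "\<exists>h\<in>fun_algebra G. \<forall>s\<in>I. (g has_real_derivative h s) (at s)" if "g \<in> G" for g
  proof -
    consider "g = \<kappa>" | "g = (\<lambda>r. 1 / \<kappa> r)" | j i where "g = (\<lambda>r. D j r $ i)"
      using \<open>g \<in> G\<close> unfolding G_def by blast
    then show ?thesis
    proof cases
      case 1
      have "\<forall>s\<in>I. (g has_real_derivative dot s * (1 / \<kappa> s)) (at s)"
        using curvature_has_derivative by (simp add: 1 dot_eq)
      then show ?thesis
        using dot G by (intro bexI[of _ "\<lambda>r. dot r * (1 / \<kappa> r)"] fun_algebra.mult) (auto simp: G_def)
    next
      case 2
      define h where "h r = (- 1) * (dot r * (1 / \<kappa> r) * ((1 / \<kappa> r) * (1 / \<kappa> r)))" for r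
      have "h \<in> fun_algebra G"
        unfolding h_def[abs_def] using dot G
        by (intro fun_algebra.mult fun_algebra.const) (auto simp: G_def)
      moreover have "\<forall>s\<in>I. (g has_real_derivative h s) (at s)"
        using curvature_has_derivative curvature_nonzero unfolding 2 dot_eq h_def
        by (auto intro!: derivative_eq_intros simp: field_simps power2_eq_square)
      ultimately show ?thesis by blast
    next
      case (3 j i)
      define h where "h r = D (Suc j) r $ i" for r
      have "h \<in> fun_algebra G"
        by (rule G) (unfold G_def h_def[abs_def], blast)
      moreover have "\<forall>s\<in>I. (g has_real_derivative h s) (at s)"
        unfolding 3 h_def
        using bounded_linear.has_vector_derivative[OF bounded_linear_vec_nth D_has_vector_derivative]
        by (simp add: has_real_derivative_iff_has_vector_derivative)
      ultimately show ?thesis by blast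
    qed
  qed
  moreover have "\<kappa> \<in> fun_algebra G"
    by (rule G) (simp add: G_def)
  ultimately show ?thesis
    using fun_algebra_real_smooth_on[OF open_I] by blast
qed

lemma curvature_derivatives:
  assumes "s \<in> I"
  shows "(\<kappa> has_real_derivative deriv \<kappa> s) (at s)"
    "(deriv \<kappa> has_real_derivative (deriv ^^ 2) \<kappa> s) (at s)"
  using real_smooth_on_higher_deriv[OF curvature_smooth assms, of 0]
    real_smooth_on_higher_deriv[OF curvature_smooth assms, of 1]
  by (simp_all add: eval_nat_numeral)

lemma D2_inner_self: "D 2 r \<bullet> D 2 r = (\<kappa> r)\<^sup>2"
  by (simp add: curvature_eq_norm power2_norm_eq_inner)

lemma tangent_unit: "s \<in> I \<Longrightarrow> D 1 s \<bullet> D 1 s = 1"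
  using unit_speed by (simp add: norm_eq_1[symmetric])

lemma tangent_orthogonal_D2:
  assumes s: "s \<in> I"
  shows "D 1 s \<bullet> D 2 s = 0"
proof -
  have "((\<lambda>r. D 1 r \<bullet> D 1 r) has_real_derivative D 1 s \<bullet> D 2 s + D 2 s \<bullet> D 1 s) (at s)"
    by (rule has_real_derivative_inner[OF D_derivatives(2)[OF s] D_derivatives(2)[OF s]])
  then have "D 1 s \<bullet> D 2 s + D 2 s \<bullet> D 1 s = 0"
    by (rule has_real_derivative_const_on_open[OF open_I s, where c = 1, rotated])
      (use tangent_unit in simp)
  then show ?thesis by (simp add: inner_commute)
qed

lemma normal_unit: "s \<in> I \<Longrightarrow> N s \<bullet> N s = 1"
  using curvature_nonzero D2_inner_self[of s] unfolding normal_eq by (simp add: power2_eq_square)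

lemma tangent_normal: "s \<in> I \<Longrightarrow> D 1 s \<bullet> N s = 0"
  using tangent_orthogonal_D2 unfolding normal_eq by simp

definition normal_deriv :: "real \<Rightarrow> real^3" where
  "normal_deriv r = (- deriv \<kappa> r / (\<kappa> r)\<^sup>2) *\<^sub>R D 2 r + (1 / \<kappa> r) *\<^sub>R D 3 r"

lemma normal_has_derivative:
  assumes s: "s \<in> I"
  shows "(N has_vector_derivative normal_deriv s) (at s)"
proof -
  have "((\<lambda>r. 1 / \<kappa> r) has_real_derivative - deriv \<kappa> s / (\<kappa> s)\<^sup>2) (at s)"
    using curvature_derivatives(1)[OF s] curvature_nonzero s
    by (auto intro!: derivative_eq_intros simp: power2_eq_square)
  from has_vector_derivative_scaleR[OF this D_derivatives(3)[OF s]]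
  show ?thesis unfolding normal_eq[abs_def] normal_deriv_def by (simp add: add.commute)
qed

lemma normal_normal_deriv:
  assumes s: "s \<in> I"
  shows "N s \<bullet> normal_deriv s = 0"
proof -
  have "((\<lambda>r. N r \<bullet> N r) has_real_derivative N s \<bullet> normal_deriv s + normal_deriv s \<bullet> N s) (at s)"
    by (rule has_real_derivative_inner[OF normal_has_derivative[OF s] normal_has_derivative[OF s]])
  then have "N s \<bullet> normal_deriv s + normal_deriv s \<bullet> N s = 0"
    by (rule has_real_derivative_const_on_open[OF open_I s, where c = 1, rotated])
      (use normal_unit in simp)
  then show ?thesis by (simp add: inner_commute)
qed

lemma tangent_normal_deriv:
  assumes s: "s \<in> I"
  shows "D 1 s \<bullet> normal_deriv s = - \<kappa> s"
proof -
  have "((\<lambda>r. D 1 r \<bullet> N r) has_real_derivative D 1 s \<bullet> normal_deriv s + D 2 s \<bullet> N s) (at s)"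
    by (rule has_real_derivative_inner[OF D_derivatives(2)[OF s] normal_has_derivative[OF s]])
  then have "D 1 s \<bullet> normal_deriv s + D 2 s \<bullet> N s = 0"
    by (rule has_real_derivative_const_on_open[OF open_I s, where c = 0, rotated])
      (use tangent_normal in simp)
  moreover have "D 2 s \<bullet> N s = \<kappa> s"
    using curvature_nonzero s D2_inner_self[of s] unfolding normal_eq by (simp add: power2_eq_square)
  ultimately show ?thesis by simp
qed

lemma normal_deriv_differentiable:
  assumes s: "s \<in> I"
  shows "normal_deriv differentiable (at s)"
proof -
  have "\<kappa> differentiable (at s)" "deriv \<kappa> differentiable (at s)"
    using curvature_derivatives[OF s] real_differentiable_def by blast+
  moreover have "D 2 differentiable (at s)" "D 3 differentiable (at s)"
    using D_derivatives(3)[OF s] D_has_vector_derivative[OF s, of 3] differentiableI_vector by blast+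
  ultimately show ?thesis
    unfolding normal_deriv_def[abs_def] using curvature_nonzero s
    by (intro differentiable_add differentiable_scaleR differentiable_divide differentiable_minus
        differentiable_power differentiable_const) auto
qed

lemma torsion_squared:
  assumes s: "s \<in> I"
  shows "(torsion \<alpha> s)\<^sup>2 = normal_deriv s \<bullet> normal_deriv s - (\<kappa> s)\<^sup>2"
proof -
  have "torsion \<alpha> s = normal_deriv s \<bullet> cross3 (D 1 s) (N s)"
    unfolding torsion_def frenet_B_def frenet_T_def vd_def
    using vector_derivative_at[OF normal_has_derivative[OF s]] by simp
  moreover have "normal_deriv s \<bullet> normal_deriv s = (normal_deriv s \<bullet> D 1 s)\<^sup>2
      + (normal_deriv s \<bullet> N s)\<^sup>2 + (normal_deriv s \<bullet> cross3 (D 1 s) (N s))\<^sup>2"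
    by (rule inner_self_orthonormal_cross[OF tangent_unit[OF s] normal_unit[OF s] tangent_normal[OF s]])
  ultimately show ?thesis
    using tangent_normal_deriv[OF s] normal_normal_deriv[OF s] by (simp add: inner_commute)
qed

abbreviation chart :: "real \<Rightarrow> real \<Rightarrow> real^3" where
  "chart \<equiv> \<lambda>s t. \<alpha> s + t *\<^sub>R N s"

lemma partial_chart:
  assumes s: "s \<in> I"
  shows "pd 0 chart s t = D 1 s + t *\<^sub>R normal_deriv s" "pd 1 chart s t = N s"
proof -
  have "((\<lambda>r. \<alpha> r + t *\<^sub>R N r) has_vector_derivative D 1 s + t *\<^sub>R normal_deriv s) (at s)"
    using D_derivatives(1)[OF s] normal_has_derivative[OF s]
    by (auto intro!: derivative_eq_intros)
  then show "pd 0 chart s t = D 1 s + t *\<^sub>R normal_deriv s"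
    unfolding pd_def by (simp add: vector_derivative_at)
  have "((\<lambda>v. \<alpha> s + v *\<^sub>R N s) has_vector_derivative N s) (at t)"
    by (auto intro!: derivative_eq_intros)
  then show "pd 1 chart s t = N s"
    unfolding pd_def by (simp add: vector_derivative_at)
qed

lemma metric_chart:
  assumes s: "s \<in> I"
  shows "metric chart 0 0 s t = (1 - t * \<kappa> s)\<^sup>2 + t\<^sup>2 * (torsion \<alpha> s)\<^sup>2"
    "metric chart 0 1 s t = 0" "metric chart 1 1 s t = 1"
proof -
  have "metric chart 0 0 s t = D 1 s \<bullet> D 1 s + 2 * t * (D 1 s \<bullet> normal_deriv s)
      + t\<^sup>2 * (normal_deriv s \<bullet> normal_deriv s)"
    unfolding metric_def partial_chart[OF s]
    by (simp add: inner_add_left inner_add_right inner_commute power2_eq_square algebra_simps)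
  then show "metric chart 0 0 s t = (1 - t * \<kappa> s)\<^sup>2 + t\<^sup>2 * (torsion \<alpha> s)\<^sup>2"
    unfolding tangent_unit[OF s] tangent_normal_deriv[OF s] torsion_squared[OF s]
    by (simp add: power2_eq_square algebra_simps)
  show "metric chart 0 1 s t = 0"
    unfolding metric_def partial_chart[OF s] using tangent_normal[OF s] normal_normal_deriv[OF s]
    by (simp add: inner_add_left inner_add_right inner_commute)
  show "metric chart 1 1 s t = 1"
    unfolding metric_def partial_chart[OF s] by (rule normal_unit[OF s])
qed

lemma chart_is_semigeodesic: "semigeodesic_chart chart I \<kappa> (\<lambda>s. (torsion \<alpha> s)\<^sup>2)"
proof
  fix s assume s: "s \<in> I"
  obtain N' where N': "(normal_deriv has_vector_derivative N') (at s)"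
    using normal_deriv_differentiable[OF s] vector_derivative_works by blast
  have "((\<lambda>r. normal_deriv r \<bullet> normal_deriv r - (\<kappa> r)\<^sup>2) has_real_derivative
      normal_deriv s \<bullet> N' + N' \<bullet> normal_deriv s - 2 * \<kappa> s * deriv \<kappa> s) (at s)"
    using has_real_derivative_inner[OF N' N'] curvature_derivatives(1)[OF s]
    by (auto intro!: derivative_eq_intros)
  then have "((\<lambda>s. (torsion \<alpha> s)\<^sup>2) has_real_derivative
      normal_deriv s \<bullet> N' + N' \<bullet> normal_deriv s - 2 * \<kappa> s * deriv \<kappa> s) (at s)"
    by (rule has_field_derivative_transform_within_open[OF _ open_I s]) (simp add: torsion_squared)
  then show "(\<lambda>s. (torsion \<alpha> s)\<^sup>2) differentiable (at s)"
    using real_differentiable_def by blast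
qed (use open_I curvature_smooth metric_chart in auto)

lemma chart_regular_along_curve:
  "\<exists>U. open U \<and> (\<forall>s\<in>I. (s, 0) \<in> U) \<and>
    (\<forall>(s, t)\<in>U. cross3 (pd 0 chart s t) (pd 1 chart s t) \<noteq> 0)"
proof -
  define f where "f p = cross3 (D 1 (fst p) + snd p *\<^sub>R normal_deriv (fst p)) (N (fst p))"
    for p :: "real \<times> real"
  define U where "U = (I \<times> UNIV) \<inter> f -` (- {0})"
  have "isCont (D 1) s" "isCont normal_deriv s" "isCont N s" if "s \<in> I" for s
    using has_vector_derivative_continuous[OF D_derivatives(2)[OF that]]
      differentiable_imp_continuous_within[OF normal_deriv_differentiable[OF that]]
      has_vector_derivative_continuous[OF normal_has_derivative[OF that]] by auto
  then have "continuous_on I (D 1)" "continuous_on I normal_deriv" "continuous_on I N"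
    using continuous_on_eq_continuous_at[OF open_I] by blast+
  then have "continuous_on (I \<times> UNIV) (\<lambda>p. D 1 (fst p))"
    "continuous_on (I \<times> UNIV) (\<lambda>p. normal_deriv (fst p))"
    "continuous_on (I \<times> UNIV) (\<lambda>p. N (fst p))"
    by (auto intro: continuous_on_compose2[OF _ continuous_on_fst])
  then have "continuous_on (I \<times> UNIV) f"
    unfolding f_def[abs_def]
    by (intro continuous_on_cross continuous_on_add continuous_on_scaleR continuous_on_snd continuous_on_id)
  then have "open U"
    unfolding U_def using open_I by (intro continuous_open_preimage open_Times) auto
  moreover have "(s, 0) \<in> U" if s: "s \<in> I" for s
  proof -
    have "(norm (cross3 (D 1 s) (N s)))\<^sup>2 + (D 1 s \<bullet> N s)\<^sup>2 = (norm (D 1 s) * norm (N s))\<^sup>2"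
      by (rule norm_cross_dot)
    then have "cross3 (D 1 s) (N s) \<noteq> 0"
      using tangent_normal[OF s] tangent_unit[OF s] normal_unit[OF s] by (auto simp: norm_eq_1[symmetric])
    then show ?thesis unfolding U_def f_def using s by simp
  qed
  moreover have "cross3 (pd 0 chart s t) (pd 1 chart s t) \<noteq> 0" if "(s, t) \<in> U" for s t
  proof -
    have s: "s \<in> I" and "f (s, t) \<noteq> 0" using that unfolding U_def by auto
    then show ?thesis unfolding partial_chart[OF s] f_def by simp
  qed
  ultimately show ?thesis by blast
qed

end

theorem proposition3p2:
  fixes \<alpha> :: "real \<Rightarrow> real^3" and I :: "real set"
  assumes I: "open I" "is_interval I" "I \<noteq> {}"
    and smooth: "smooth_curve_on I \<alpha>"
    and arclen: "\<forall>s\<in>I. norm (vd \<alpha> s) = 1"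
    and kpos: "\<forall>s\<in>I. curvature \<alpha> s \<noteq> 0"
    and knc: "\<not> (\<exists>c. \<forall>s\<in>I. curvature \<alpha> s = c)"
    and keq: "\<exists>c1 c2. \<forall>s\<in>I.
       5 * (deriv (curvature \<alpha>) s)\<^sup>2 = c2 - 2 * c1 / curvature \<alpha> s + (curvature \<alpha> s) ^ 4"
    and tnc: "\<not> (\<exists>c. \<forall>s\<in>I. torsion \<alpha> s = c)"
    and teq: "\<forall>s\<in>I.
       (deriv ^^ 4) (curvature \<alpha>) s
       - 15 * curvature \<alpha> s * (deriv (curvature \<alpha>) s)\<^sup>2
       - 10 * (curvature \<alpha> s)\<^sup>2 * (deriv ^^ 2) (curvature \<alpha>) s
       + (curvature \<alpha> s) ^ 5
       - (torsion \<alpha> s)\<^sup>2 * ((deriv ^^ 2) (curvature \<alpha>) s - 2 * (curvature \<alpha> s) ^ 3) = 0"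
  shows "let x = (\<lambda>s t. \<alpha> s + t *\<^sub>R frenet_N \<alpha> s); \<gamma> = (\<lambda>s. (s, 0::real)) in
     (\<exists>U. open U \<and> (\<forall>s\<in>I. (s, 0) \<in> U) \<and>
          (\<forall>(s, t)\<in>U. cross3 (pd 0 x s t) (pd 1 x s t) \<noteq> 0)) \<and>
     triharmonic_in x I \<gamma> \<and>
     (\<exists>e\<in>{-1, 1}. has_geodesic_curvature x I \<gamma> e (curvature \<alpha>)) \<and>
     \<not> (\<exists>c. \<forall>s\<in>I. curvature \<alpha> s = c)"
proof -
  interpret frenet_curve \<alpha> I
    using I(1) smooth arclen kpos by unfold_locales
  interpret semigeodesic_chart chart I \<kappa> "\<lambda>s. (torsion \<alpha> s)\<^sup>2"
    by (rule chart_is_semigeodesic)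
  obtain c1 c2 where "\<forall>s\<in>I. 5 * (deriv \<kappa> s)\<^sup>2 = c2 - 2 * c1 / \<kappa> s + \<kappa> s ^ 4"
    using keq by blast
  then have "\<forall>s\<in>I. \<kappa> s * (deriv ^^ 3) \<kappa> s + 2 * deriv \<kappa> s * (deriv ^^ 2) \<kappa> s
      - 2 * \<kappa> s ^ 3 * deriv \<kappa> s = 0"
    using ode_of_first_integral[OF open_I curvature_smooth kpos] by blast
  then have "triharmonic_in chart I base_curve"
    using teq unfolding triharmonic_in_iff by simp
  then show ?thesis
    unfolding Let_def using chart_regular_along_curve geodesic_curvature knc by blast
qed

end
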